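(* Let $\{u_k(t), b_k(t)\}_{k\in\mathbb{Z}}$ be a solution of the unrestricted Toda chain $$\dot b_k = u_{k+1}-u_k,\qquad \dot u_k = u_k\,(b_k-b_{k-1}),\qquad k\in\mathbb{Z},$$ with $u_k(t)\neq 0$ for all $k$. Fix an integer $j$. Then $b_j(t)\equiv 0$ if and only if $$u_{j+n}=u_{j-n+1},\qquad b_{j+n-1}=-b_{j-n+1}\qquad\text{for all } n\in\mathbb{Z}.$$
   Context: All functions are analytic functions of the real (or complex) variable $t$; a dot denotes $d/dt$. Nondegeneracy $u_k(t)\neq 0$ is the paper's standing assumption for solutions of the unrestricted Toda chain. *)

theory Defs
  imports "HOL-Analysis.Analysis"
begin

end

theory Submission
  imports Defs
begin

text \<open>
  The reflection \<open>u k \<mapsto> u (2j + 1 - k)\<close>, \<open>b k \<mapsto> - b (2j - k)\<close> maps solutions of the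
  Toda chain to solutions, and \<open>b j = 0\<close> is exactly the condition fixed at the centre.
  Instead of invoking uniqueness for the infinite system, the symmetry is propagated outwards
  from \<open>j\<close> one site at a time: differentiating \<open>b p = - b q\<close> with the first Toda equation
  relates the differences of the \<open>u\<close>'s, and differentiating \<open>u p = u q\<close> with the second one
  and cancelling the nonvanishing factor \<open>u p\<close> relates the differences of the \<open>b\<close>'s.
\<close>

lemma deriv_transform_within_open:
  assumes "open S" "t \<in> S" "\<And>s. s \<in> S \<Longrightarrow> f s = g s"
  shows "deriv f t = deriv g t"
  using assms by (intro deriv_cong_ev) (auto intro: eventually_nhds_in_open eventually_mono)

locale toda_chain =
  fixes u b :: "int \<Rightarrow> complex \<Rightarrow> complex" and S :: "complex set"
  assumes open_S: "open S"
    and b_differentiable: "\<And>k t. t \<in> S \<Longrightarrow> b k field_differentiable at t"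
    and toda_b: "\<And>k t. t \<in> S \<Longrightarrow> deriv (b k) t = u (k + 1) t - u k t"
    and toda_u: "\<And>k t. t \<in> S \<Longrightarrow> deriv (u k) t = u k t * (b k t - b (k - 1) t)"
    and nondeg: "\<And>k t. t \<in> S \<Longrightarrow> u k t \<noteq> 0"
begin

lemma u_step_antisym_if_b_antisym:
  assumes "\<And>s. s \<in> S \<Longrightarrow> b p s = - b q s" and t: "t \<in> S"
  shows "u (p + 1) t - u p t = u q t - u (q + 1) t"
proof -
  have "u (p + 1) t - u p t = deriv (b p) t"
    using toda_b[OF t] by simp
  also have "\<dots> = deriv (\<lambda>s. - b q s) t"
    using open_S t assms(1) by (rule deriv_transform_within_open)
  also have "\<dots> = - deriv (b q) t"
    using b_differentiable[OF t] by simp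
  finally show ?thesis
    using toda_b[OF t] by simp
qed

lemma b_step_eq_if_u_eq:
  assumes "\<And>s. s \<in> S \<Longrightarrow> u p s = u q s" and t: "t \<in> S"
  shows "b p t - b (p - 1) t = b q t - b (q - 1) t"
proof -
  have "u p t * (b p t - b (p - 1) t) = deriv (u p) t"
    using toda_u[OF t] by simp
  also have "\<dots> = deriv (u q) t"
    using open_S t assms(1) by (rule deriv_transform_within_open)
  also have "\<dots> = u p t * (b q t - b (q - 1) t)"
    using toda_u[OF t] assms(1)[OF t] by simp
  finally show ?thesis
    using nondeg[OF t] by simp
qed

lemma reflection_symmetry_nat:
  assumes bj: "\<And>t. t \<in> S \<Longrightarrow> b j t = 0"
  shows "(\<forall>t\<in>S. b (j + int m) t = - b (j - int m) t) \<and>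
         (\<forall>t\<in>S. u (j + int m + 1) t = u (j - int m) t)"
proof (induction m)
  case 0
  have "u (j + 1) t - u j t = u j t - u (j + 1) t" if "t \<in> S" for t
    using bj that by (intro u_step_antisym_if_b_antisym) auto
  then show ?case
    using bj by (simp add: eq_diff_eq)
next
  case (Suc m)
  have b_next: "b (j + int m + 1) t = - b (j - int m - 1) t" if t: "t \<in> S" for t
  proof -
    have "b (j + int m + 1) t - b (j + int m) t = b (j - int m) t - b (j - int m - 1) t"
      using b_step_eq_if_u_eq[of "j + int m + 1" "j - int m", OF _ t] Suc.IH by simp
    moreover have "b (j + int m) t = - b (j - int m) t"
      using Suc.IH t by blast
    ultimately show ?thesis
      by algebra
  qed
  have "u (j + int m + 2) t = u (j - int m - 1) t" if t: "t \<in> S" for t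
  proof -
    have "u (j + int m + 2) t - u (j + int m + 1) t = u (j - int m - 1) t - u (j - int m) t"
      using u_step_antisym_if_b_antisym[of "j + int m + 1" "j - int m - 1", OF b_next t]
      by (simp add: add.assoc)
    moreover have "u (j + int m + 1) t = u (j - int m) t"
      using Suc.IH t by blast
    ultimately show ?thesis
      by algebra
  qed
  with b_next show ?case
    by (simp add: algebra_simps)
qed

lemma reflection_symmetry:
  assumes "\<And>t. t \<in> S \<Longrightarrow> b j t = 0" and t: "t \<in> S"
  shows "b (j + n) t = - b (j - n) t" and "u (j + n) t = u (j - n + 1) t"
proof -
  note sym = reflection_symmetry_nat[OF assms(1)]
  show "b (j + n) t = - b (j - n) t"
  proof (cases "n \<ge> 0")
    case True
    then show ?thesis
      using sym[of "nat n"] t by simp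
  next
    case False
    then show ?thesis
      using sym[of "nat (- n)"] t by simp
  qed
  show "u (j + n) t = u (j - n + 1) t"
  proof (cases "n \<ge> 1")
    case True
    then show ?thesis
      using sym[of "nat (n - 1)"] t by (simp add: algebra_simps)
  next
    case False
    then show ?thesis
      using sym[of "nat (- n)"] t by simp
  qed
qed

end

theorem mainTheorem1:
  fixes u b :: "int \<Rightarrow> complex \<Rightarrow> complex"
    and S :: "complex set" and j :: int
  assumes S_open: "open S" and S_conn: "connected S" and S_ne: "S \<noteq> {}"
    and u_an: "\<And>k. u k analytic_on S"
    and b_an: "\<And>k. b k analytic_on S"
    and toda_b: "\<And>k t. t \<in> S \<Longrightarrow> deriv (b k) t = u (k + 1) t - u k t"
    and toda_u: "\<And>k t. t \<in> S \<Longrightarrow> deriv (u k) t = u k t * (b k t - b (k - 1) t)"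
    and nondeg: "\<And>k t. t \<in> S \<Longrightarrow> u k t \<noteq> 0"
  shows "(\<forall>t\<in>S. b j t = 0) \<longleftrightarrow>
         (\<forall>n::int. \<forall>t\<in>S. u (j + n) t = u (j - n + 1) t \<and> b (j + n - 1) t = - b (j - n + 1) t)"
proof
  assume sym: "\<forall>n::int. \<forall>t\<in>S. u (j + n) t = u (j - n + 1) t \<and> b (j + n - 1) t = - b (j - n + 1) t"
  show "\<forall>t\<in>S. b j t = 0"
  proof
    fix t assume "t \<in> S"
    with sym have "b (j + 1 - 1) t = - b (j - 1 + 1) t" by blast
    then show "b j t = 0" by simp
  qed
next
  assume bj: "\<forall>t\<in>S. b j t = 0"
  interpret toda_chain u b S
    using S_open b_an toda_b toda_u nondeg
    by unfold_locales (auto intro: analytic_on_imp_differentiable_at)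
  show "\<forall>n::int. \<forall>t\<in>S. u (j + n) t = u (j - n + 1) t \<and> b (j + n - 1) t = - b (j - n + 1) t"
  proof (intro allI ballI conjI)
    fix n t assume "t \<in> S"
    with bj show "u (j + n) t = u (j - n + 1) t"
      by (simp add: reflection_symmetry)
    from bj \<open>t \<in> S\<close> have "b (j + (n - 1)) t = - b (j - (n - 1)) t"
      by (simp add: reflection_symmetry)
    then show "b (j + n - 1) t = - b (j - n + 1) t"
      by (simp add: algebra_simps)
  qed
qed

end
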